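(* Let $\sigma$ be a state with $q=ch(\sigma)\ge 1$, let $D\subseteq\mathcal U$ be a question, and let $\sigma_{yes},\sigma_{no}$ be the resulting states. If $|w_{q-1}(\sigma_{yes})-w_{q-1}(\sigma_{no})|\le 1$, then $ch(\sigma_{yes})\le q-1$ and $ch(\sigma_{no})\le q-1$.
   Context: Let $\mathcal U=\{0,\dots,2^m-1\}$. A state is a map $\sigma:\mathcal U\to\{0,1,2,3,4\}$ with type $(t_0,t_1,t_2,t_3)$, $t_i=|\sigma^{-1}(i)|$. For $q\ge0$ the $q$-th volume is $w_q(\sigma)=\sum_{j=0}^3 t_j\sum_{\ell=0}^{3-j}\binom{q}{\ell}$, and the character is $ch(\sigma)=\min\{q\ge 0: w_q(\sigma)\le 2^q\}$. For a question $D\subseteq\mathcal U$, $\sigma_{yes}(y)=\min\{\sigma(y)+[y\notin D],4\}$ and $\sigma_{no}(y)=\min\{\sigma(y)+[y\in D],4\}$. *)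

theory Defs
  imports Main
begin

definition universe :: "nat \<Rightarrow> nat set" where
  "universe m = {0..<2^m}"

definition is_state :: "nat \<Rightarrow> (nat \<Rightarrow> nat) \<Rightarrow> bool" where
  "is_state m \<sigma> \<longleftrightarrow> (\<forall>y \<in> universe m. \<sigma> y \<le> 4)"

definition tcount :: "nat \<Rightarrow> (nat \<Rightarrow> nat) \<Rightarrow> nat \<Rightarrow> nat" where
  "tcount m \<sigma> i = card {y \<in> universe m. \<sigma> y = i}"

definition volume :: "nat \<Rightarrow> (nat \<Rightarrow> nat) \<Rightarrow> nat \<Rightarrow> nat" where
  "volume m \<sigma> q = (\<Sum>j\<le>3. tcount m \<sigma> j * (\<Sum>l\<le>3 - j. q choose l))"

definition character :: "nat \<Rightarrow> (nat \<Rightarrow> nat) \<Rightarrow> nat" where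
  "character m \<sigma> = (LEAST q. volume m \<sigma> q \<le> 2^q)"

definition sigma_yes :: "(nat \<Rightarrow> nat) \<Rightarrow> nat set \<Rightarrow> nat \<Rightarrow> nat" where
  "sigma_yes \<sigma> D y = min (\<sigma> y + (if y \<notin> D then 1 else 0)) 4"

definition sigma_no :: "(nat \<Rightarrow> nat) \<Rightarrow> nat set \<Rightarrow> nat \<Rightarrow> nat" where
  "sigma_no \<sigma> D y = min (\<sigma> y + (if y \<in> D then 1 else 0)) 4"

end

theory Submission
  imports Defs
begin

text \<open>Each point y contributes the weight of its value \<sigma> y to the volume, and the weights obey
  Pascal's rule: the weight of j at q+1 is the weight of j plus the weight of j+1 at q.
  A question sends every point to value \<sigma> y in one answer and \<sigma> y + 1 in the other, so
  w_{q-1}(\<sigma>_yes) + w_{q-1}(\<sigma>_no) = w_q(\<sigma>) \<le> 2^q (conservation of volume). Two naturals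
  with sum at most 2^q and difference at most 1 are both at most 2^{q-1}. The only subtle
  point is that the character is well defined: volumes grow polynomially in q.\<close>

text \<open>Values \<ge> 4 get weight 0.\<close>
definition volume_weight :: "nat \<Rightarrow> nat \<Rightarrow> nat" where
  "volume_weight j q = (if j \<le> 3 then (\<Sum>l\<le>3 - j. q choose l) else 0)"

lemma volume_eq_sum_weight: "volume m \<sigma> q = (\<Sum>y\<in>universe m. volume_weight (\<sigma> y) q)"
proof -
  have fin: "finite (universe m)" by (simp add: universe_def)
  have "(\<Sum>y\<in>universe m. volume_weight (\<sigma> y) q)
      = (\<Sum>y\<in>universe m. \<Sum>j\<le>3. (if \<sigma> y = j then (\<Sum>l\<le>3 - j. q choose l) else 0))"
    by (rule sum.cong) (auto simp: volume_weight_def if_distrib sum.delta cong: if_cong)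
  also have "\<dots> = (\<Sum>j\<le>3. \<Sum>y\<in>universe m. (if \<sigma> y = j then (\<Sum>l\<le>3 - j. q choose l) else 0))"
    by (rule sum.swap)
  also have "\<dots> = volume m \<sigma> q"
    unfolding volume_def tcount_def
    by (rule sum.cong) (simp_all add: sum.If_cases[OF fin] Int_def)
  finally show ?thesis by simp
qed

lemma volume_weight_min_4: "volume_weight (min j 4) q = volume_weight j q"
  by (simp add: volume_weight_def min_def)

lemma volume_weight_Suc: "volume_weight j (Suc q) = volume_weight j q + volume_weight (Suc j) q"
proof -
  consider "j = 0" | "j = 1" | "j = 2" | "j = 3" | "j \<ge> 4" by linarith
  then show ?thesis
    by cases (simp_all add: volume_weight_def numeral_eq_Suc atMost_Suc)
qed

lemma volume_sigma_yes_plus_sigma_no: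
  "volume m (sigma_yes \<sigma> D) q + volume m (sigma_no \<sigma> D) q = volume m \<sigma> (Suc q)"
  unfolding volume_eq_sum_weight sum.distrib[symmetric]
  by (rule sum.cong) (auto simp: sigma_yes_def sigma_no_def volume_weight_min_4 volume_weight_Suc)

lemma binomial_le_cube:
  assumes "q \<ge> 1" "l \<le> 3"
  shows "q choose l \<le> q ^ 3"
proof -
  have "q choose l \<le> q ^ l"
    by (cases "l \<le> q") (auto intro: binomial_le_pow simp: binomial_eq_0)
  also have "\<dots> \<le> q ^ 3" using assms by (simp add: power_increasing)
  finally show ?thesis .
qed

lemma volume_weight_le: "q \<ge> 1 \<Longrightarrow> volume_weight j q \<le> 4 * q ^ 3"
proof -
  assume "q \<ge> 1"
  have "volume_weight j q \<le> (\<Sum>l\<le>3. q choose l)"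
    by (auto simp: volume_weight_def intro!: sum_mono2)
  also have "\<dots> \<le> (\<Sum>l\<le>(3::nat). q ^ 3)"
    using \<open>q \<ge> 1\<close> by (intro sum_mono binomial_le_cube) auto
  finally show ?thesis by simp
qed

lemma volume_le: "q \<ge> 1 \<Longrightarrow> volume m \<sigma> q \<le> 2 ^ m * (4 * q ^ 3)"
proof -
  assume "q \<ge> 1"
  then have "volume m \<sigma> q \<le> (\<Sum>y\<in>universe m. 4 * q ^ 3)"
    unfolding volume_eq_sum_weight by (intro sum_mono volume_weight_le)
  then show ?thesis by (simp add: universe_def)
qed

text \<open>At q = 2^(m+5) the polynomial bound 2^m * 4 * q^3 equals 2^(4m+17), which is below 2^q.\<close>
lemma ex_volume_le_power: "\<exists>q. volume m \<sigma> q \<le> 2 ^ q"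
proof
  define k where "k = m + 5"
  define q :: nat where "q = 2 ^ k"
  have "volume m \<sigma> q \<le> 2 ^ m * (4 * q ^ 3)" by (rule volume_le) (simp add: q_def)
  also have "\<dots> = 2 ^ (m + 2 + 3 * k)"
    by (simp add: q_def power_add power_mult[symmetric] mult.commute)
  also have "\<dots> \<le> 2 ^ q"
  proof (rule power_increasing)
    have "m + 1 < 2 ^ (m + 1)" by (rule less_exp)
    then show "m + 2 + 3 * k \<le> q" by (simp add: q_def k_def power_add)
  qed simp
  finally show "volume m \<sigma> q \<le> 2 ^ q" .
qed

lemma volume_character_le: "volume m \<sigma> (character m \<sigma>) \<le> 2 ^ character m \<sigma>"
  unfolding character_def by (rule LeastI_ex) (rule ex_volume_le_power)

lemma character_le: "volume m \<sigma> q \<le> 2 ^ q \<Longrightarrow> character m \<sigma> \<le> q"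
  unfolding character_def by (rule Least_le)

lemma balanced_halves_le:
  fixes a b p :: nat
  assumes "a + b \<le> 2 ^ Suc p" and "\<bar>int a - int b\<bar> \<le> 1"
  shows "a \<le> 2 ^ p" and "b \<le> 2 ^ p"
  using assms by auto

theorem lemma1:
  fixes m :: nat and \<sigma> :: "nat \<Rightarrow> nat" and D :: "nat set" and q :: nat
  assumes "is_state m \<sigma>"
    and "q = character m \<sigma>" and "q \<ge> 1"
    and "D \<subseteq> universe m"
    and "\<bar>int (volume m (sigma_yes \<sigma> D) (q - 1)) - int (volume m (sigma_no \<sigma> D) (q - 1))\<bar> \<le> 1"
  shows "character m (sigma_yes \<sigma> D) \<le> q - 1 \<and> character m (sigma_no \<sigma> D) \<le> q - 1"
proof -
  obtain p where q: "q = Suc p" using \<open>q \<ge> 1\<close> by (cases q) auto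
  have "volume m (sigma_yes \<sigma> D) p + volume m (sigma_no \<sigma> D) p \<le> 2 ^ Suc p"
    using volume_character_le[of m \<sigma>] \<open>q = character m \<sigma>\<close> q
    by (simp only: volume_sigma_yes_plus_sigma_no)
  with assms(5) q have "volume m (sigma_yes \<sigma> D) p \<le> 2 ^ p" "volume m (sigma_no \<sigma> D) p \<le> 2 ^ p"
    using balanced_halves_le by auto
  then show ?thesis using q by (simp add: character_le)
qed

end
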